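(* Let $n\ge 2$ and let $\mu$ be a weight of the irreducible highest weight module $V(\Lambda_n)$ of the simple Lie algebra of type $C_n$. Suppose that every element $v\in B(\Lambda_n)$ with $\mathrm{wt}(v)=\mu$ has exactly $m<n$ single entries. Then $n-m=2k$ is even and $$\dim V(\Lambda_n)_\mu=\frac{1}{k+1}\binom{2k}{k}.$$
   Context: Let $\epsilon_1,\dots,\epsilon_n$ be the standard orthonormal basis of the dual of the Cartan subalgebra of $C_n$, with simple roots $\alpha_i=\epsilon_i-\epsilon_{i+1}$ ($1\le i\le n-1$), $\alpha_n=2\epsilon_n$, and fundamental weights $\Lambda_1,\dots,\Lambda_n$. Let $S=\{1,\dots,n,\bar n,\dots,\bar 1\}$ with total order $1\prec 2\prec\cdots\prec n\prec\bar n\prec\cdots\prec\bar 1$. The crystal $B(\Lambda_n)$ (Kashiwara–Nakashima) is the set of $n$-tuples $(i_1,\dots,i_n)$ of elements of $S$ with $i_1\prec i_2\prec\cdots\prec i_n$ such that whenever $i_k=p$ and $i_l=\bar p$ one has $k+(n-l+1)\le p$. Set $\mathrm{wt}(i)=\epsilon_i$, $\mathrm{wt}(\bar i)=-\epsilon_i$ and $\mathrm{wt}(i_1,\dots,i_n)=\sum_j\mathrm{wt}(i_j)$; then $\dim V(\Lambda_n)_\mu$ equals the number of elements of $B(\Lambda_n)$ of weight $\mu$. For $v=(i_1,\dots,i_n)\in B(\Lambda_n)$, an entry $i_k=p$ (resp. $i_k=\bar p$) is called a pair if $\bar p$ (resp. $p$) also occurs among the entries of $v$, and a single otherwise. *)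

theory Defs
  imports Complex_Main
begin

text \<open>Elements of S = {1,...,n, n-bar,...,1-bar} are encoded as nonzero integers:
  p (1 \<le> p \<le> n) is encoded as the integer p, and p-bar as the integer -p.\<close>

definition S_C :: "nat \<Rightarrow> int set" where
  "S_C n = {1..int n} \<union> {-int n..-1}"

text \<open>Position of an element in the total order 1 < 2 < ... < n < n-bar < ... < 1-bar.\<close>
definition rk :: "nat \<Rightarrow> int \<Rightarrow> int" where
  "rk n x = (if x > 0 then x else 2 * int n + 1 + x)"

text \<open>Kashiwara--Nakashima crystal B(Lambda_n) of type C_n: n-tuples (lists, 0-based indices)
  strictly increasing in the order above, such that whenever entry k (1-based) is p and entry l
  (1-based) is p-bar, k + (n - l + 1) \<le> p.\<close>
definition B_Lambda :: "nat \<Rightarrow> int list set" where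
  "B_Lambda n = {v. length v = n \<and> set v \<subseteq> S_C n \<and>
      sorted_wrt (\<lambda>a b. rk n a < rk n b) v \<and>
      (\<forall>k<n. \<forall>l<n. \<forall>p. v ! k = p \<and> v ! l = -p \<and> p > 0 \<longrightarrow>
          int (k + 1) + (int n - int (l + 1) + 1) \<le> p)}"

text \<open>Weight of v, given by its coordinates w.r.t. epsilon_1,...,epsilon_n
  (coordinate i; coordinates outside 1..n are 0).\<close>
definition wt :: "int list \<Rightarrow> nat \<Rightarrow> int" where
  "wt v i = int (length (filter (\<lambda>x. x = int i) v)) - int (length (filter (\<lambda>x. x = - int i) v))"

text \<open>Dimension of the weight space V(Lambda_n)_mu = number of crystal elements of weight mu.\<close>
definition wdim :: "nat \<Rightarrow> (nat \<Rightarrow> int) \<Rightarrow> nat" where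
  "wdim n \<mu> = card {v \<in> B_Lambda n. wt v = \<mu>}"

definition num_singles :: "int list \<Rightarrow> nat" where
  "num_singles v = card {k. k < length v \<and> - (v ! k) \<notin> set v}"

end

theory Submission
  imports Defs
begin

(* An element of B(Lambda_n) is determined by its set X of entries, and the Kashiwara-Nakashima
   condition for a pair p, p-bar says that at most p entries of X have absolute value at most p.
   The weight fixes the single entries; at every other position i either both i and i-bar occur
   or neither. Recording each position 1..n as Single, Paired or Absent, the condition becomes a
   ballot condition: every initial segment 1..p ending in a Paired position contains at most as
   many Paired as Absent positions. As |X| = n, there are k Paired and k Absent positions with
   n - m = 2k, and such words are counted by the ballot number C(2k,k) - C(2k,k-1), the k-th
   Catalan number. *)

datatype letter = Single | Paired | Absent

fun ballot :: "letter list \<Rightarrow> bool" where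
  "ballot [] \<longleftrightarrow> True"
| "ballot (c # w) \<longleftrightarrow> ballot w \<and> (c = Paired \<longrightarrow> count_list (c # w) Paired \<le> count_list (c # w) Absent)"

lemma length_eq_count_letters:
  "length w = count_list w Single + count_list w Paired + count_list w Absent"
proof (induction w)
  case (Cons x w)
  then show ?case by (cases x) simp_all
qed simp

definition ballot_words :: "bool list \<Rightarrow> nat \<Rightarrow> nat \<Rightarrow> letter list set" where
  "ballot_words s a b = {w. map (\<lambda>c. c = Single) w = s \<and>
      count_list w Paired = a \<and> count_list w Absent = b \<and> ballot w}"

lemma ballot_words_Nil: "ballot_words [] a b = (if a = 0 \<and> b = 0 then {[]} else {})"
  by (auto simp: ballot_words_def)

lemma ballot_words_Cons_True: "ballot_words (True # s) a b = Cons Single ` ballot_words s a b"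
  by (auto simp: ballot_words_def Cons_eq_map_conv)

lemma ballot_words_Cons_False:
  "ballot_words (False # s) a b =
     (if 1 \<le> a \<and> a \<le> b then Cons Paired ` ballot_words s (a - 1) b else {}) \<union>
     (if 1 \<le> b then Cons Absent ` ballot_words s a (b - 1) else {})"
    (is "_ = ?R")
proof (rule set_eqI)
  fix w
  show "w \<in> ballot_words (False # s) a b \<longleftrightarrow> w \<in> ?R"
  proof (cases w)
    case (Cons x w')
    then show ?thesis by (cases x) (auto simp: ballot_words_def)
  qed (auto simp: ballot_words_def)
qed

lemma finite_ballot_words: "finite (ballot_words s a b)"
proof (induction s arbitrary: a b)
  case (Cons x s)
  then show ?case by (cases x) (simp_all add: ballot_words_Cons_True ballot_words_Cons_False)
qed (simp add: ballot_words_Nil)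

lemma ballot_words_empty: "b < a \<Longrightarrow> ballot_words s a b = {}"
proof (induction s arbitrary: a b)
  case (Cons x s)
  then show ?case by (cases x) (simp_all add: ballot_words_Cons_True ballot_words_Cons_False)
qed (simp add: ballot_words_Nil)

text \<open>The guard avoids the truncated subtraction \<open>a - 1\<close> at \<open>a = 0\<close>.\<close>
definition ballot_number :: "nat \<Rightarrow> nat \<Rightarrow> int" where
  "ballot_number a b = int ((a + b) choose a) - (if a = 0 then 0 else int ((a + b) choose (a - 1)))"

lemma ballot_number_0_left [simp]: "ballot_number 0 b = 1"
  by (simp add: ballot_number_def)

lemma ballot_number_rec:
  assumes "1 \<le> a" "a \<le> b"
  shows "ballot_number a b = ballot_number (a - 1) b + (if a < b then ballot_number a (b - 1) else 0)"
proof -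
  obtain a' where a: "a = Suc a'" using assms by (cases a) auto
  obtain N where N: "a + b = Suc N" using assms by (cases "a + b") auto
  have "a - 1 + b = N" "a + (b - 1) = N" using N assms by auto
  then have e: "ballot_number a b = int (Suc N choose Suc a') - int (Suc N choose a')"
      "ballot_number (a - 1) b = int (N choose a') - (if a' = 0 then 0 else int (N choose (a' - 1)))"
      "ballot_number a (b - 1) = int (N choose Suc a') - int (N choose a')"
    unfolding ballot_number_def using N a by simp_all
  have p: "Suc N choose a' = (if a' = 0 then 1 else (N choose (a' - 1)) + (N choose a'))"
    by (cases a') simp_all
  show ?thesis
  proof (cases "a < b")
    case True
    then show ?thesis using e p by (cases "a' = 0") simp_all
  next
    case False
    then have "N = Suc (a' + a')" using N a assms by simp
    then have "N choose Suc a' = N choose a'"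
      using binomial_symmetric[of a' N] by simp
    then show ?thesis using False e p by (cases "a' = 0") simp_all
  qed
qed

lemma card_ballot_words:
  "a \<le> b \<Longrightarrow> length s = a + b + count_list s True \<Longrightarrow> int (card (ballot_words s a b)) = ballot_number a b"
proof (induction s arbitrary: a b)
  case Nil
  then show ?case by (simp add: ballot_words_Nil)
next
  case (Cons x s)
  show ?case
  proof (cases x)
    case True
    then show ?thesis using Cons by (simp add: ballot_words_Cons_True card_image)
  next
    case False
    have len: "length s + 1 = a + b + count_list s True"
      using Cons.prems False by simp
    show ?thesis
    proof (cases "a = 0")
      case True
      have "count_list s True \<le> length s" by (rule count_le_length)
      then have "1 \<le> b" using len True by linarith
      then show ?thesis using True False Cons.IH[of 0 "b - 1"] len
        by (simp add: ballot_words_Cons_False card_image)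
    next
      case a0: False
      then have ab: "1 \<le> a" "1 \<le> b" using Cons.prems by auto
      have "card (ballot_words (x # s) a b) = card (ballot_words s (a - 1) b) + card (ballot_words s a (b - 1))"
        using False ab Cons.prems
        by (simp add: ballot_words_Cons_False, subst card_Un_disjoint)
           (auto simp: finite_ballot_words card_image)
      moreover have "int (card (ballot_words s (a - 1) b)) = ballot_number (a - 1) b"
        using Cons.IH[of "a - 1" b] len ab Cons.prems by simp
      moreover have "int (card (ballot_words s a (b - 1))) = (if a < b then ballot_number a (b - 1) else 0)"
        using Cons.IH[of a "b - 1"] len ab Cons.prems ballot_words_empty[of "b - 1" a s] by auto
      ultimately show ?thesis using ballot_number_rec[OF ab(1) Cons.prems(1)] by simp
    qed
  qed
qed

lemma ballot_number_diag: "ballot_number k k * (int k + 1) = int ((2 * k) choose k)"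
proof (cases k)
  case (Suc j)
  have "Suc k * ((2 * k) choose j) = k * ((2 * k) choose k)"
    using Suc by (metis Suc_times_binomial_add add_Suc mult_2)
  then have j: "(int k + 1) * int ((2 * k) choose j) = int k * int ((2 * k) choose k)"
    by (metis of_nat_Suc of_nat_mult add.commute)
  have b: "ballot_number k k = int ((2 * k) choose k) - int ((2 * k) choose j)"
    unfolding ballot_number_def using Suc by (simp add: mult_2)
  have "ballot_number k k * (int k + 1) =
      int ((2 * k) choose k) * (int k + 1) - (int k + 1) * int ((2 * k) choose j)"
    unfolding b by (simp add: algebra_simps)
  then show ?thesis unfolding j by (simp add: algebra_simps)
qed simp

lemma card_ballot_words_diag:
  assumes "length s = 2 * k + count_list s True"
  shows "card (ballot_words s k k) * (k + 1) = (2 * k) choose k"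
proof -
  have "int (card (ballot_words s k k) * (k + 1)) = ballot_number k k * (int k + 1)"
    using card_ballot_words[of k k s] assms by (simp add: algebra_simps)
  also have "\<dots> = int ((2 * k) choose k)"
    by (rule ballot_number_diag)
  finally show ?thesis
    by (simp only: of_nat_eq_iff)
qed


lemma distinct_if_sorted_wrt_key:
  fixes f :: "'a \<Rightarrow> 'b::linorder"
  shows "sorted_wrt (\<lambda>a b. f a < f b) v \<Longrightarrow> distinct v"
  by (simp add: strict_sorted_iff distinct_map flip: sorted_wrt_map)

lemma card_key_sorted_lists:
  fixes f :: "'a \<Rightarrow> 'b::linorder"
  assumes inj: "inj_on f S" and "finite S"
  shows "card {v. length v = n \<and> set v \<subseteq> S \<and> sorted_wrt (\<lambda>a b. f a < f b) v \<and> P (set v)} =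
         card {X. X \<subseteq> S \<and> card X = n \<and> P X}"
    (is "card ?L = card ?R")
proof (rule bij_betw_same_card)
  interpret folding_insort_key "(\<le>) :: 'b \<Rightarrow> _" "(<)" S f
    by unfold_locales (rule inj)
  have fin: "finite X" if "X \<subseteq> S" for X
    using that \<open>finite S\<close> by (rule finite_subset)
  have unique: "v = w"
    if "X \<subseteq> S" "sorted_wrt (\<lambda>a b. f a < f b) v \<and> set v = X \<and> length v = card X"
      "sorted_wrt (\<lambda>a b. f a < f b) w \<and> set w = X \<and> length w = card X" for X v w
    using that sorted_key_list_of_set_unique[OF that(1) fin[OF that(1)]] by (simp add: sorted_wrt_map)
  have exists: "\<exists>v. sorted_wrt (\<lambda>a b. f a < f b) v \<and> set v = X \<and> length v = card X"
    if "X \<subseteq> S" for X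
    using finite_set_strict_sorted[OF that fin[OF that]] by (metis sorted_wrt_map)
  have "inj_on set ?L"
    using unique distinct_if_sorted_wrt_key[of f] by (intro inj_onI) (metis (no_types, lifting) mem_Collect_eq distinct_card)
  moreover have "set ` ?L = ?R"
    using exists distinct_if_sorted_wrt_key[of f] by (auto simp: distinct_card image_iff)
  ultimately show "bij_betw set ?L ?R"
    by (simp add: bij_betw_def)
qed

lemma sorted_wrt_key_nth_le_iff:
  fixes f :: "'a \<Rightarrow> 'b::linorder"
  assumes "sorted_wrt (\<lambda>a b. f a < f b) v" "i < length v" "j < length v"
  shows "f (v ! i) \<le> f (v ! j) \<longleftrightarrow> i \<le> j"
  using sorted_wrt_nth_less[OF assms(1), of i j] sorted_wrt_nth_less[OF assms(1), of j i] assms(2,3)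
  by (cases i j rule: linorder_cases) auto

lemma card_key_le_nth:
  fixes f :: "'a \<Rightarrow> 'b::linorder"
  assumes s: "sorted_wrt (\<lambda>a b. f a < f b) v" and k: "k < length v"
  shows "card {x \<in> set v. f x \<le> f (v ! k)} = Suc k"
proof -
  have "{x \<in> set v. f x \<le> f (v ! k)} = nth v ` {i. i < length v \<and> f (v ! i) \<le> f (v ! k)}"
    by (auto simp: in_set_conv_nth)
  also have "{i. i < length v \<and> f (v ! i) \<le> f (v ! k)} = {..k}"
    using sorted_wrt_key_nth_le_iff[OF s _ k] k by auto
  finally show ?thesis
    using k distinct_if_sorted_wrt_key[OF s] by (simp add: card_image inj_on_nth)
qed

lemma card_key_ge_nth:
  fixes f :: "'a \<Rightarrow> 'b::linorder"
  assumes s: "sorted_wrt (\<lambda>a b. f a < f b) v" and k: "k < length v"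
  shows "card {x \<in> set v. f (v ! k) \<le> f x} = length v - k"
proof -
  have "{x \<in> set v. f (v ! k) \<le> f x} = nth v ` {i. i < length v \<and> f (v ! k) \<le> f (v ! i)}"
    by (auto simp: in_set_conv_nth)
  also have "{i. i < length v \<and> f (v ! k) \<le> f (v ! i)} = {k..<length v}"
    using sorted_wrt_key_nth_le_iff[OF s k] by auto
  finally show ?thesis
    using distinct_if_sorted_wrt_key[OF s] by (simp add: card_image inj_on_nth)
qed

text \<open>For entries \<open>i\<^sub>k = p\<close> and \<open>i\<^sub>l = p-bar\<close>, \<open>k + (n - l + 1)\<close> is the number of entries
  of absolute value at most \<open>p\<close> (lemma \<open>card_abs_le_pair\<close>), so the crystal condition only
  depends on the set of entries.\<close>
definition pair_condition :: "int set \<Rightarrow> bool" where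
  "pair_condition X \<longleftrightarrow> (\<forall>p. int p \<in> X \<and> - int p \<in> X \<longrightarrow> card {x \<in> X. \<bar>x\<bar> \<le> int p} \<le> p)"

definition set_wt :: "int set \<Rightarrow> nat \<Rightarrow> int" where
  "set_wt X i = of_bool (int i \<in> X) - of_bool (- int i \<in> X)"

definition crystal_sets :: "nat \<Rightarrow> (nat \<Rightarrow> int) \<Rightarrow> int set set" where
  "crystal_sets n \<mu> = {X. X \<subseteq> S_C n \<and> card X = n \<and> pair_condition X \<and> set_wt X = \<mu>}"

lemma mem_S_C_iff: "x \<in> S_C n \<longleftrightarrow> x \<noteq> 0 \<and> \<bar>x\<bar> \<le> int n"
  by (auto simp: S_C_def)

lemma inj_on_rk: "inj_on (rk n) (S_C n)"
  by (auto simp: inj_on_def rk_def S_C_def split: if_splits)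

lemma card_abs_le_pair:
  assumes v: "length v = n" "set v \<subseteq> S_C n" "sorted_wrt (\<lambda>a b. rk n a < rk n b) v"
    and kl: "k < n" "l < n" "v ! k = p" "v ! l = - p" "0 < p"
  shows "card {x \<in> set v. \<bar>x\<bar> \<le> p} = Suc k + (n - l)"
proof -
  have X: "x \<noteq> 0 \<and> \<bar>x\<bar> \<le> int n" if "x \<in> set v" for x
    using that v(2) by (auto simp: mem_S_C_iff)
  have "p \<le> int n"
    using X[of p] kl v(1) nth_mem[of k v] by auto
  then have "\<bar>x\<bar> \<le> p \<longleftrightarrow> rk n x \<le> rk n p \<or> rk n (- p) \<le> rk n x"
    and "\<not> (rk n x \<le> rk n p \<and> rk n (- p) \<le> rk n x)" if "x \<in> set v" for x
    using X[OF that] kl(5) by (auto simp: rk_def)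
  then have "{x \<in> set v. \<bar>x\<bar> \<le> p} =
      {x \<in> set v. rk n x \<le> rk n (v ! k)} \<union> {x \<in> set v. rk n (v ! l) \<le> rk n x}"
    and "{x \<in> set v. rk n x \<le> rk n (v ! k)} \<inter> {x \<in> set v. rk n (v ! l) \<le> rk n x} = {}"
    using kl by auto
  moreover have "card {x \<in> set v. rk n x \<le> rk n (v ! k)} = Suc k"
    using card_key_le_nth[OF v(3), of k] v(1) kl by simp
  moreover have "card {x \<in> set v. rk n (v ! l) \<le> rk n x} = n - l"
    using card_key_ge_nth[OF v(3), of l] v(1) kl by simp
  ultimately show ?thesis
    using kl by (simp add: card_Un_disjoint)
qed

lemma B_Lambda_iff:
  "v \<in> B_Lambda n \<longleftrightarrow>
     length v = n \<and> set v \<subseteq> S_C n \<and> sorted_wrt (\<lambda>a b. rk n a < rk n b) v \<and> pair_condition (set v)"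
proof -
  have "(\<forall>k<n. \<forall>l<n. \<forall>p. v ! k = p \<and> v ! l = - p \<and> p > 0 \<longrightarrow>
          int (k + 1) + (int n - int (l + 1) + 1) \<le> p) \<longleftrightarrow> pair_condition (set v)"
    if v: "length v = n" "set v \<subseteq> S_C n" "sorted_wrt (\<lambda>a b. rk n a < rk n b) v"
  proof
    assume idx: "\<forall>k<n. \<forall>l<n. \<forall>p. v ! k = p \<and> v ! l = - p \<and> p > 0 \<longrightarrow>
          int (k + 1) + (int n - int (l + 1) + 1) \<le> p"
    show "pair_condition (set v)"
      unfolding pair_condition_def
    proof (intro allI impI)
      fix p assume p: "int p \<in> set v \<and> - int p \<in> set v"
      then obtain k l where "k < n" "v ! k = int p" "l < n" "v ! l = - int p"
        using v(1) by (auto simp: in_set_conv_nth)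
      moreover have "0 < int p"
        using p v(2) by (auto simp: mem_S_C_iff)
      ultimately show "card {x \<in> set v. \<bar>x\<bar> \<le> int p} \<le> p"
        using idx card_abs_le_pair[OF v] by fastforce
    qed
  next
    assume pc: "pair_condition (set v)"
    show "\<forall>k<n. \<forall>l<n. \<forall>p. v ! k = p \<and> v ! l = - p \<and> p > 0 \<longrightarrow>
          int (k + 1) + (int n - int (l + 1) + 1) \<le> p"
    proof (intro allI impI)
      fix k l p assume kl: "k < n" "l < n" and p: "v ! k = p \<and> v ! l = - p \<and> p > 0"
      then have "int (nat p) \<in> set v \<and> - int (nat p) \<in> set v"
        using v(1) nth_mem[of k v] nth_mem[of l v] by auto
      then have "card {x \<in> set v. \<bar>x\<bar> \<le> p} \<le> nat p"
        using pc p unfolding pair_condition_def by fastforce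
      then show "int (k + 1) + (int n - int (l + 1) + 1) \<le> p"
        using card_abs_le_pair[OF v kl] p kl by simp
    qed
  qed
  then show ?thesis
    unfolding B_Lambda_def by blast
qed

lemma wt_eq_set_wt: "distinct v \<Longrightarrow> wt v = set_wt (set v)"
proof -
  assume "distinct v"
  then have "length (filter (\<lambda>x. x = a) v) = of_bool (a \<in> set v)" for a
    by (induction v) auto
  then show ?thesis
    by (simp add: fun_eq_iff wt_def set_wt_def)
qed

lemma wdim_eq_card_crystal_sets: "wdim n \<mu> = card (crystal_sets n \<mu>)"
proof -
  have "{v \<in> B_Lambda n. wt v = \<mu>} = {v. length v = n \<and> set v \<subseteq> S_C n \<and>
      sorted_wrt (\<lambda>a b. rk n a < rk n b) v \<and> pair_condition (set v) \<and> set_wt (set v) = \<mu>}"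
    using wt_eq_set_wt distinct_if_sorted_wrt_key[of "rk n"] by (auto simp: B_Lambda_iff)
  then show ?thesis
    unfolding wdim_def crystal_sets_def
    using card_key_sorted_lists[OF inj_on_rk, of n n] by (simp add: S_C_def)
qed

definition single_mask :: "nat \<Rightarrow> (nat \<Rightarrow> int) \<Rightarrow> bool list" where
  "single_mask n \<mu> = map (\<lambda>i. \<mu> i \<noteq> 0) (rev [1..<Suc n])"

lemma length_single_mask [simp]: "length (single_mask n \<mu>) = n"
  by (simp add: single_mask_def)

lemma nth_single_mask: "j < n \<Longrightarrow> single_mask n \<mu> ! j = (\<mu> (n - j) \<noteq> 0)"
  by (simp add: single_mask_def rev_nth Suc_diff_Suc del: upt_Suc)

definition letter_at :: "int set \<Rightarrow> nat \<Rightarrow> letter" where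
  "letter_at X i = (if int i \<in> X \<and> - int i \<in> X then Paired
                    else if int i \<in> X \<or> - int i \<in> X then Single else Absent)"

text \<open>Positions are listed from \<open>p\<close> down to \<open>1\<close>, so the suffixes of \<open>word n X\<close> are the
  words \<open>word p X\<close> of the initial segments \<open>{1..p}\<close>.\<close>
definition word :: "nat \<Rightarrow> int set \<Rightarrow> letter list" where
  "word p X = map (letter_at X) (rev [1..<Suc p])"

lemma word_0 [simp]: "word 0 X = []"
  by (simp add: word_def)

lemma word_Suc [simp]: "word (Suc p) X = letter_at X (Suc p) # word p X"
  by (simp add: word_def)

lemma length_word [simp]: "length (word p X) = p"
  by (simp add: word_def)

lemma nth_word: "j < p \<Longrightarrow> word p X ! j = letter_at X (p - j)"
  by (simp add: word_def rev_nth Suc_diff_Suc del: upt_Suc)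

lemma mem_iff_letter_at:
  "int i \<in> X \<longleftrightarrow> letter_at X i = Paired \<or> set_wt X i = 1"
  "- int i \<in> X \<longleftrightarrow> letter_at X i = Paired \<or> set_wt X i = -1"
  by (auto simp: letter_at_def set_wt_def)

lemma map_Single_word: "map (\<lambda>c. c = Single) (word n X) = single_mask n (set_wt X)"
  by (auto simp: word_def single_mask_def letter_at_def set_wt_def)

lemma count_Single_eq_count_True: "count_list w Single = count_list (map (\<lambda>c. c = Single) w) True"
  by (induction w) auto

lemma card_abs_le_Suc:
  "card {x \<in> Y. \<bar>x\<bar> \<le> int (Suc p)} = card {x \<in> Y. \<bar>x\<bar> \<le> int p} + card (Y \<inter> {int (Suc p), - int (Suc p)})"
proof -
  have "{x \<in> Y. \<bar>x\<bar> \<le> int (Suc p)} = {x \<in> Y. \<bar>x\<bar> \<le> int p} \<union> (Y \<inter> {int (Suc p), - int (Suc p)})"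
    by auto
  moreover have "finite {x \<in> Y. \<bar>x\<bar> \<le> int p}"
    by (rule finite_subset[of _ "{- int p..int p}"]) auto
  moreover have "{x \<in> Y. \<bar>x\<bar> \<le> int p} \<inter> (Y \<inter> {int (Suc p), - int (Suc p)}) = {}"
    by auto
  ultimately show ?thesis
    by (simp add: card_Un_disjoint)
qed

lemma card_abs_le_eq_count_word:
  "0 \<notin> X \<Longrightarrow> card {x \<in> X. \<bar>x\<bar> \<le> int p} = 2 * count_list (word p X) Paired + count_list (word p X) Single"
proof (induction p)
  case 0
  then have "{x \<in> X. \<bar>x\<bar> \<le> 0} = {}" by auto
  then show ?case by simp
next
  case (Suc p)
  then show ?case
    using card_abs_le_Suc[of X p] by (auto simp: letter_at_def Int_insert_right)
qed

definition singles :: "int set \<Rightarrow> int set" where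
  "singles X = {x \<in> X. - x \<notin> X}"

lemma card_singles_eq_count_word:
  "card {x \<in> singles X. \<bar>x\<bar> \<le> int p} = count_list (word p X) Single"
proof (induction p)
  case 0
  have "{x \<in> singles X. \<bar>x\<bar> \<le> 0} = {}"
    by (auto simp: singles_def)
  then show ?case by simp
next
  case (Suc p)
  have "card (singles X \<inter> {int (Suc p), - int (Suc p)}) = of_bool (letter_at X (Suc p) = Single)"
    by (auto simp: singles_def letter_at_def Int_insert_right add.commute)
  then show ?case
    using Suc card_abs_le_Suc[of "singles X" p] by simp
qed

lemma card_eq_count_word:
  assumes "X \<subseteq> S_C n"
  shows "card X = 2 * count_list (word n X) Paired + count_list (word n X) Single"
proof -
  have "{x \<in> X. \<bar>x\<bar> \<le> int n} = X" "0 \<notin> X"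
    using assms by (auto simp: mem_S_C_iff)
  then show ?thesis
    using card_abs_le_eq_count_word[of X n] by simp
qed

lemma count_Paired_le_Absent_iff:
  assumes "0 \<notin> X"
  shows "count_list (word p X) Paired \<le> count_list (word p X) Absent \<longleftrightarrow> card {x \<in> X. \<bar>x\<bar> \<le> int p} \<le> p"
  using card_abs_le_eq_count_word[OF assms, of p] length_eq_count_letters[of "word p X", unfolded length_word]
  by arith

lemma ballot_word_iff:
  assumes "0 \<notin> X"
  shows "ballot (word n X) \<longleftrightarrow> (\<forall>p\<le>n. int p \<in> X \<and> - int p \<in> X \<longrightarrow> card {x \<in> X. \<bar>x\<bar> \<le> int p} \<le> p)"
proof (induction n)
  case 0
  then show ?case using assms by simp
next
  case (Suc n)
  have "(\<forall>p\<le>Suc n. int p \<in> X \<and> - int p \<in> X \<longrightarrow> card {x \<in> X. \<bar>x\<bar> \<le> int p} \<le> p) \<longleftrightarrow>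
      (\<forall>p\<le>n. int p \<in> X \<and> - int p \<in> X \<longrightarrow> card {x \<in> X. \<bar>x\<bar> \<le> int p} \<le> p) \<and>
      (int (Suc n) \<in> X \<and> - int (Suc n) \<in> X \<longrightarrow> card {x \<in> X. \<bar>x\<bar> \<le> int (Suc n)} \<le> Suc n)"
    by (auto simp: le_Suc_eq)
  moreover have "letter_at X (Suc n) = Paired \<longleftrightarrow> int (Suc n) \<in> X \<and> - int (Suc n) \<in> X"
    by (simp add: letter_at_def)
  moreover have "ballot (word (Suc n) X) \<longleftrightarrow> ballot (word n X) \<and> (letter_at X (Suc n) = Paired \<longrightarrow>
      count_list (word (Suc n) X) Paired \<le> count_list (word (Suc n) X) Absent)"
    unfolding word_Suc by simp
  ultimately show ?case
    using Suc count_Paired_le_Absent_iff[OF assms, of "Suc n"] by blast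
qed

lemma pair_condition_iff_ballot:
  assumes "X \<subseteq> S_C n"
  shows "pair_condition X \<longleftrightarrow> ballot (word n X)"
proof -
  have "0 \<notin> X"
    using assms by (auto simp: mem_S_C_iff)
  moreover have "p \<le> n" if "int p \<in> X" for p
    using assms that by (auto simp: mem_S_C_iff)
  ultimately show ?thesis
    unfolding pair_condition_def ballot_word_iff[OF \<open>0 \<notin> X\<close>] by blast
qed

lemma S_C_cases:
  assumes "x \<in> S_C n"
  obtains i where "1 \<le> i" "i \<le> n" "x = int i \<or> x = - int i"
  using assms by (intro that[of "nat \<bar>x\<bar>"]) (auto simp: mem_S_C_iff)

lemma word_inj:
  assumes "X \<subseteq> S_C n" "Y \<subseteq> S_C n" "set_wt X = set_wt Y" "word n X = word n Y"
  shows "X = Y"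
proof -
  have "letter_at X i = letter_at Y i" if "1 \<le> i" "i \<le> n" for i
    using arg_cong[OF assms(4), of "\<lambda>w. w ! (n - i)"] nth_word[of "n - i" n] that by simp
  then have "int i \<in> X \<longleftrightarrow> int i \<in> Y" "- int i \<in> X \<longleftrightarrow> - int i \<in> Y" if "1 \<le> i" "i \<le> n" for i
    using that assms(3) by (simp_all add: mem_iff_letter_at)
  then show ?thesis
    using assms(1,2) by (blast elim: S_C_cases)
qed

lemma word_surj:
  assumes X0: "X0 \<subseteq> S_C n"
    and w: "map (\<lambda>c. c = Single) w = single_mask n (set_wt X0)"
  obtains X where "X \<subseteq> S_C n" "set_wt X = set_wt X0" "word n X = w"
proof -
  let ?\<mu> = "set_wt X0"
  define c where "c i = w ! (n - i)" for i
  have len: "length w = n"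
    using arg_cong[OF w, of length] by simp
  have c_Single: "c i = Single \<longleftrightarrow> ?\<mu> i \<noteq> 0" if "1 \<le> i" "i \<le> n" for i
    using arg_cong[OF w, of "\<lambda>s. s ! (n - i)"] len that by (simp add: c_def nth_single_mask)
  have \<mu>_range: "?\<mu> i \<in> {-1, 0, 1}" for i
    by (simp add: set_wt_def)
  define X where "X = {int i |i. 1 \<le> i \<and> i \<le> n \<and> (c i = Paired \<or> ?\<mu> i = 1)} \<union>
                      {- int i |i. 1 \<le> i \<and> i \<le> n \<and> (c i = Paired \<or> ?\<mu> i = -1)}"
  have pos: "int i \<in> X \<longleftrightarrow> 1 \<le> i \<and> i \<le> n \<and> (c i = Paired \<or> ?\<mu> i = 1)"
    and neg: "- int i \<in> X \<longleftrightarrow> 1 \<le> i \<and> i \<le> n \<and> (c i = Paired \<or> ?\<mu> i = -1)" for i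
    by (auto simp: X_def)
  have letter: "letter_at X i = c i" if "1 \<le> i" "i \<le> n" for i
    using that c_Single[OF that] \<mu>_range[of i] by (cases "c i") (auto simp: letter_at_def pos neg)
  show thesis
  proof
    show "X \<subseteq> S_C n"
      by (auto simp: X_def S_C_def)
    show "set_wt X = set_wt X0"
    proof
      fix i
      show "set_wt X i = ?\<mu> i"
      proof (cases "1 \<le> i \<and> i \<le> n")
        case True
        then show ?thesis
          using c_Single[of i] \<mu>_range[of i] by (auto simp: set_wt_def pos neg)
      next
        case False
        then show ?thesis
          using X0 by (auto simp: set_wt_def pos neg S_C_def)
      qed
    qed
    show "word n X = w"
    proof (rule nth_equalityI)
      fix j assume "j < length (word n X)"
      then show "word n X ! j = w ! j"
        using letter[of "n - j"] by (simp add: nth_word c_def)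
    qed (simp add: len)
  qed
qed

lemma count_word_crystal_set:
  assumes "X \<in> crystal_sets n \<mu>"
  shows "count_list (word n X) Single = count_list (single_mask n \<mu>) True"
    and "n = 2 * count_list (word n X) Paired + count_list (word n X) Single"
    and "count_list (word n X) Absent = count_list (word n X) Paired"
proof -
  have X: "X \<subseteq> S_C n" "card X = n" "set_wt X = \<mu>"
    using assms by (auto simp: crystal_sets_def)
  show "count_list (word n X) Single = count_list (single_mask n \<mu>) True"
    using X(3) by (simp add: count_Single_eq_count_True map_Single_word)
  show n: "n = 2 * count_list (word n X) Paired + count_list (word n X) Single"
    using card_eq_count_word[OF X(1)] X(2) by simp
  show "count_list (word n X) Absent = count_list (word n X) Paired"
    using length_eq_count_letters[of "word n X"] n by simp
qed

lemma card_crystal_sets: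
  assumes X0: "X0 \<in> crystal_sets n \<mu>"
  defines "k \<equiv> count_list (word n X0) Paired"
  shows "card (crystal_sets n \<mu>) = card (ballot_words (single_mask n \<mu>) k k)"
proof (rule bij_betw_same_card)
  let ?s = "single_mask n \<mu>"
  have \<mu>: "\<mu> = set_wt X0" and "X0 \<subseteq> S_C n"
    using X0 by (auto simp: crystal_sets_def)
  have "inj_on (word n) (crystal_sets n \<mu>)"
    by (intro inj_onI word_inj) (auto simp: crystal_sets_def)
  moreover have "word n ` crystal_sets n \<mu> \<subseteq> ballot_words ?s k k"
  proof
    fix w assume "w \<in> word n ` crystal_sets n \<mu>"
    then obtain X where X: "X \<in> crystal_sets n \<mu>" and w: "w = word n X" by blast
    have "count_list w Paired = k" "count_list w Absent = k"
      using count_word_crystal_set[OF X] count_word_crystal_set[OF X0] by (simp_all add: w k_def)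
    moreover have "map (\<lambda>c. c = Single) w = ?s" "ballot w"
      using X pair_condition_iff_ballot by (auto simp: w map_Single_word crystal_sets_def)
    ultimately show "w \<in> ballot_words ?s k k"
      by (simp add: ballot_words_def)
  qed
  moreover have "ballot_words ?s k k \<subseteq> word n ` crystal_sets n \<mu>"
  proof
    fix w assume w: "w \<in> ballot_words ?s k k"
    then obtain X where X: "X \<subseteq> S_C n" "set_wt X = \<mu>" "word n X = w"
      using word_surj[OF \<open>X0 \<subseteq> S_C n\<close>, of w] by (auto simp: ballot_words_def \<mu>)
    have "card X = n"
      using w card_eq_count_word[OF X(1)] count_word_crystal_set(1,2)[OF X0] X(3)
      by (simp add: ballot_words_def count_Single_eq_count_True k_def)
    moreover have "pair_condition X"
      using w X pair_condition_iff_ballot by (simp add: ballot_words_def)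
    ultimately show "w \<in> word n ` crystal_sets n \<mu>"
      using X by (auto simp: crystal_sets_def)
  qed
  ultimately show "bij_betw (word n) (crystal_sets n \<mu>) (ballot_words ?s k k)"
    by (simp add: bij_betw_def subset_antisym)
qed

lemma set_mem_crystal_sets:
  assumes "v \<in> B_Lambda n"
  shows "set v \<in> crystal_sets n (wt v)"
proof -
  have "distinct v"
    using assms distinct_if_sorted_wrt_key[of "rk n" v] by (simp add: B_Lambda_iff)
  then show ?thesis
    using assms by (simp add: B_Lambda_iff crystal_sets_def wt_eq_set_wt distinct_card)
qed

lemma num_singles_eq_count_word:
  assumes "v \<in> B_Lambda n"
  shows "num_singles v = count_list (word n (set v)) Single"
proof -
  have "distinct v" "set v \<subseteq> S_C n"
    using assms distinct_if_sorted_wrt_key[of "rk n" v] by (auto simp: B_Lambda_iff)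
  then have "num_singles v = card (singles (set v))"
    unfolding num_singles_def singles_def
    by (subst card_image[OF inj_on_nth, symmetric]) (auto simp: in_set_conv_nth intro!: arg_cong[where f = card])
  also have "singles (set v) = {x \<in> singles (set v). \<bar>x\<bar> \<le> int n}"
    using \<open>set v \<subseteq> S_C n\<close> by (auto simp: singles_def mem_S_C_iff)
  finally show ?thesis
    by (simp add: card_singles_eq_count_word)
qed

theorem mainTheorem1:
  fixes n m :: nat and \<mu> :: "nat \<Rightarrow> int"
  assumes "n \<ge> 2"
    and "\<exists>v \<in> B_Lambda n. wt v = \<mu>"
    and "m < n"
    and "\<forall>v \<in> B_Lambda n. wt v = \<mu> \<longrightarrow> num_singles v = m"
  shows "\<exists>k. n - m = 2 * k \<and> real (wdim n \<mu>) = 1 / real (k + 1) * real ((2 * k) choose k)"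
proof -
  obtain v where v: "v \<in> B_Lambda n" "wt v = \<mu>"
    using assms(2) by blast
  then have X: "set v \<in> crystal_sets n \<mu>"
    using set_mem_crystal_sets by blast
  define k where "k = count_list (word n (set v)) Paired"
  let ?s = "single_mask n \<mu>"
  have m: "m = count_list ?s True"
    using assms(4) v num_singles_eq_count_word count_word_crystal_set(1)[OF X] by simp
  have n: "n = 2 * k + m"
    using count_word_crystal_set(1,2)[OF X] m by (simp add: k_def)
  have "length ?s = 2 * k + count_list ?s True"
    using n m length_single_mask[of n \<mu>] by linarith
  then have "wdim n \<mu> * (k + 1) = (2 * k) choose k"
    using wdim_eq_card_crystal_sets card_crystal_sets[OF X] card_ballot_words_diag[of ?s k]
    by (simp add: k_def)
  then have "real (wdim n \<mu>) * real (k + 1) = real ((2 * k) choose k)"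
    by (metis of_nat_mult)
  then show ?thesis
    using n by (intro exI[of _ k]) (simp add: field_simps)
qed

end
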